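(* Let $\tilde r\in(\tfrac14,\tfrac12)$ and let $\rho$ be an RSR-representation of the four-punctured sphere whose local monodromies $M_j$ are conjugate to $\mathrm{diag}(e^{2\pi i\tilde r},e^{-2\pi i\tilde r})$, with trace coordinates $(\tilde x,\tilde y,\tilde z)=(\mathrm{Tr}(M_2M_1),\mathrm{Tr}(M_3M_2),\mathrm{Tr}(M_3M_1))$. Then, with $r=2\tilde r-\tfrac12$, there is a real representation (i.e. a real point of the character variety, conjugate to an $\mathrm{SL}(2,\mathbb{R})$-representation) in $\mathcal M^r_{1,1}$ whose trace coordinates $(x,y,z)$ satisfy $\tilde x=2-x^2$, $\tilde y=2-y^2$, $\tilde z=2-z^2$.
   Context: Four-punctured sphere $S_4=\mathbb{C}P^1\setminus\{p_1,\dots,p_4\}$ with generators $\gamma_{p_j}$ of $\pi_1(S_4,s_0)$ (simple anticlockwise loops around $p_j$) satisfying $\gamma_{p_4}\gamma_{p_3}\gamma_{p_2}\gamma_{p_1}=1$, $M_j=\rho(\gamma_{p_j})$. An irreducible representation $\rho\colon\pi_1(S_4,s_0)\to\mathrm{SL}(2,\mathbb{C})$ is RSR if: it takes values in $\mathrm{SL}(2,\mathbb{R})$ with $\mathrm{Tr}(M_1M_2),\mathrm{Tr}(M_2M_3),\mathrm{Tr}(M_1M_3)<-2$; all $M_j$ lie in the conjugacy class of $\mathrm{diag}(e^{2\pi i\tilde r},e^{-2\pi i\tilde r})$ with $\tilde r\in(\tfrac14,\tfrac12)$; and $\mathrm{tr}(M_1M_3)=\mathrm{tr}(M_2M_4)$.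 $\mathcal M^r_{1,1}$ is the space of conjugacy classes of representations $\langle\gamma_x,\gamma_y\rangle=\pi_1(T^2\setminus\{o\})\to\mathrm{SL}(2,\mathbb{C})$ such that the commutator $\gamma_y^{-1}\gamma_x^{-1}\gamma_y\gamma_x$ (a loop around the puncture) is mapped into the conjugacy class of $\mathrm{diag}(e^{-2\pi ir},e^{2\pi ir})$; trace coordinates $x=\mathrm{Tr}X$, $y=\mathrm{Tr}Y$, $z=\mathrm{Tr}(YX)$ with $X,Y$ the images of $\gamma_x,\gamma_y$; they satisfy $x^2+y^2+z^2-xyz-2-2\cos(2\pi r)=0$. *)

theory Defs
  imports "HOL-Analysis.Analysis"
begin

type_synonym cmat2 = "complex^2^2"

definition SL2C :: "cmat2 \<Rightarrow> bool" where
  "SL2C A \<longleftrightarrow> det A = 1"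

definition real_mat :: "cmat2 \<Rightarrow> bool" where
  "real_mat A \<longleftrightarrow> (\<forall>i j. A $ i $ j \<in> \<real>)"

definition SL2R :: "cmat2 \<Rightarrow> bool" where
  "SL2R A \<longleftrightarrow> SL2C A \<and> real_mat A"

definition diag2 :: "complex \<Rightarrow> complex \<Rightarrow> cmat2" where
  "diag2 a b = (\<chi> i j. if i = j then (if i = 1 then a else b) else 0)"

definition conj_class :: "cmat2 \<Rightarrow> cmat2 \<Rightarrow> bool" where
  "conj_class A B \<longleftrightarrow> (\<exists>P. invertible P \<and> A = P ** B ** matrix_inv P)"

text \<open>A representation of pi_1(S_4) = <g1,g2,g3,g4 | g4 g3 g2 g1 = 1> into SL(2,C)
  is determined by the images M1..M4 of the generators, subject to the relation.\<close>
definition rep_S4 :: "cmat2 \<Rightarrow> cmat2 \<Rightarrow> cmat2 \<Rightarrow> cmat2 \<Rightarrow> bool" where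
  "rep_S4 M1 M2 M3 M4 \<longleftrightarrow> SL2C M1 \<and> SL2C M2 \<and> SL2C M3 \<and> SL2C M4 \<and>
     M4 ** M3 ** M2 ** M1 = mat 1"

definition irreducible_rep :: "cmat2 list \<Rightarrow> bool" where
  "irreducible_rep Ms \<longleftrightarrow>
     \<not> (\<exists>v :: complex^2. v \<noteq> 0 \<and> (\<forall>M \<in> set Ms. \<exists>c. M *v v = c *s v))"

definition RSR :: "real \<Rightarrow> cmat2 \<Rightarrow> cmat2 \<Rightarrow> cmat2 \<Rightarrow> cmat2 \<Rightarrow> bool" where
  "RSR rt M1 M2 M3 M4 \<longleftrightarrow>
     rep_S4 M1 M2 M3 M4 \<and> irreducible_rep [M1, M2, M3, M4] \<and>
     SL2R M1 \<and> SL2R M2 \<and> SL2R M3 \<and> SL2R M4 \<and>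
     Re (trace (M1 ** M2)) < -2 \<and> Re (trace (M2 ** M3)) < -2 \<and> Re (trace (M1 ** M3)) < -2 \<and>
     (\<forall>M \<in> {M1, M2, M3, M4}.
        conj_class M (diag2 (cis (2 * pi * rt)) (cis (-(2 * pi * rt))))) \<and>
     trace (M1 ** M3) = trace (M2 ** M4)"

text \<open>A representation of pi_1(T^2 minus a point) = <gx, gy> (free) with X, Y its images,
  lying in M^r_{1,1}: commutator Y^-1 X^-1 Y X in the class of diag(e^{-2 pi i r}, e^{2 pi i r}).\<close>
definition in_M11 :: "real \<Rightarrow> cmat2 \<Rightarrow> cmat2 \<Rightarrow> bool" where
  "in_M11 r X Y \<longleftrightarrow> SL2C X \<and> SL2C Y \<and>
     conj_class (matrix_inv Y ** matrix_inv X ** Y ** X)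
                (diag2 (cis (-(2 * pi * r))) (cis (2 * pi * r)))"

definition real_rep2 :: "cmat2 \<Rightarrow> cmat2 \<Rightarrow> bool" where
  "real_rep2 X Y \<longleftrightarrow> (\<exists>P. invertible P \<and>
     real_mat (P ** X ** matrix_inv P) \<and> real_mat (P ** Y ** matrix_inv P))"

end

(* By the Fricke trace identities, the traces of an RSR representation satisfy
   (X + Y + Z - 4 + t^2)^2 = X Y Z, where X = 2 - tr(M2 M1), Y = 2 - tr(M3 M2), Z = 2 - tr(M3 M1)
   all exceed 4 and t = 2 cos(2 pi rt) is the common trace of the M_j.  Hence x = sqrt X,
   y = sqrt Y and z = (X + Y + Z - 4 + t^2) / (x y) solve x^2 + y^2 + z^2 - x y z = 4 - t^2
   = 2 + 2 cos(2 pi r), with |z| > 2.  Such a real triple is the trace triple of an explicit pair of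
   SL(2,R) matrices, and the commutator of that pair has trace 2 cos(2 pi r) with 0 < 2 pi r < pi,
   so it has distinct eigenvalues e^(-2 pi i r), e^(2 pi i r) and lies in the required class. *)

theory Submission
  imports Defs
begin

definition mat2 :: "complex \<Rightarrow> complex \<Rightarrow> complex \<Rightarrow> complex \<Rightarrow> cmat2" where
  "mat2 a b c d = (\<chi> i j. if i = 1 then (if j = 1 then a else b) else (if j = 1 then c else d))"

lemma mat2_nth [simp]:
  "mat2 a b c d $ 1 $ 1 = a" "mat2 a b c d $ 1 $ 2 = b"
  "mat2 a b c d $ 2 $ 1 = c" "mat2 a b c d $ 2 $ 2 = d"
  by (simp_all add: mat2_def)

lemma mat2_cases:
  obtains a b c d where "A = mat2 a b c d"
proof
  show "A = mat2 (A$1$1) (A$1$2) (A$2$1) (A$2$2)"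
    unfolding mat2_def vec_eq_iff forall_2 by simp
qed

lemma mat2_eq_iff: "mat2 a b c d = mat2 a' b' c' d' \<longleftrightarrow> a = a' \<and> b = b' \<and> c = c' \<and> d = d'"
  by (metis mat2_nth)

lemma mat2_mult [simp]:
  "mat2 a b c d ** mat2 e f g h = mat2 (a*e + b*g) (a*f + b*h) (c*e + d*g) (c*f + d*h)"
  by (simp add: vec_eq_iff forall_2 matrix_matrix_mult_def sum_2)

lemma trace_mat2 [simp]: "trace (mat2 a b c d) = a + d"
  by (simp add: trace_def sum_2)

lemma det_mat2 [simp]: "det (mat2 a b c d) = a * d - b * c"
  by (simp add: det_2)

lemma mat_1_eq_mat2: "mat 1 = mat2 1 0 0 1"
  by (simp add: mat2_def mat_def vec_eq_iff forall_2)

lemma diag2_eq_mat2: "diag2 a b = mat2 a 0 0 b"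
  by (simp add: mat2_def diag2_def vec_eq_iff forall_2)

lemma real_mat_mat2: "real_mat (mat2 a b c d) \<longleftrightarrow> a \<in> \<real> \<and> b \<in> \<real> \<and> c \<in> \<real> \<and> d \<in> \<real>"
  unfolding real_mat_def by (simp add: forall_2)

lemma matrix_inv_right: "invertible A \<Longrightarrow> A ** matrix_inv A = mat 1"
  and matrix_inv_left: "invertible A \<Longrightarrow> matrix_inv A ** A = mat 1"
  unfolding invertible_def matrix_inv_def by (metis (mono_tags, lifting) someI_ex)+

lemma matrix_inv_unique:
  fixes A B :: "'a::comm_ring_1^'n^'n"
  assumes "A ** B = mat 1" "B ** A = mat 1"
  shows "matrix_inv A = B"
proof -
  have "invertible A" using assms invertible_def by blast
  then show ?thesis
    by (metis assms(1) matrix_inv_left matrix_mul_assoc matrix_mul_lid matrix_mul_rid)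
qed

lemma det_matrix_inv:
  fixes A :: "'a::field^'n^'n"
  assumes "invertible A"
  shows "det (matrix_inv A) = inverse (det A)"
proof -
  have "det A * det (matrix_inv A) = 1"
    by (metis assms det_I det_mul matrix_inv_right)
  then show ?thesis by (simp add: inverse_unique)
qed

lemma matrix_inv_mat2: "a * d - b * c = 1 \<Longrightarrow> matrix_inv (mat2 a b c d) = mat2 d (-b) (-c) a"
  by (rule matrix_inv_unique) (simp_all add: mat_1_eq_mat2 algebra_simps)

lemma trace_matrix_inv_SL2: "det (A::cmat2) = 1 \<Longrightarrow> trace (matrix_inv A) = trace A"
  by (cases A rule: mat2_cases) (simp add: matrix_inv_mat2 add.commute)

lemma left_inverse_eq_matrix_inv:
  fixes A B :: "'a::comm_ring_1^'n^'n"
  assumes "B ** A = mat 1" "invertible A"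
  shows "B = matrix_inv A"
  by (metis assms matrix_inv_right matrix_mul_assoc matrix_mul_lid matrix_mul_rid)

lemma conj_class_trace: "conj_class A B \<Longrightarrow> trace A = trace B"
  unfolding conj_class_def
  by (metis matrix_inv_left matrix_mul_assoc matrix_mul_lid trace_mul_sym)

lemma conj_classI:
  assumes "det P \<noteq> 0" "A ** P = P ** B"
  shows "conj_class A B"
proof -
  have inv: "invertible P" using assms invertible_det_nz by blast
  have "A = A ** P ** matrix_inv P" by (simp add: matrix_mul_assoc[symmetric] matrix_inv_right inv)
  then have "A = P ** B ** matrix_inv P" by (simp add: assms(2))
  then show ?thesis unfolding conj_class_def using inv by blast
qed

lemma conj_class_diag2:
  assumes "det C = \<mu> * \<nu>" "trace C = \<mu> + \<nu>" "\<mu> \<noteq> \<nu>"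
  shows "conj_class C (diag2 \<mu> \<nu>)"
proof -
  obtain a b c d where C: "C = mat2 a b c d" by (rule mat2_cases)
  have det: "a * d - b * c = \<mu> * \<nu>" and tr: "a + d = \<mu> + \<nu>" using assms C by auto
  have "\<mu> - \<nu> \<noteq> 0" using assms(3) by simp
  show ?thesis
  proof (cases "b = 0")
    case False
    \<comment> \<open>the columns of the conjugating matrix are eigenvectors for \<mu> and \<nu>\<close>
    show ?thesis
    proof (rule conj_classI[where P = "mat2 b b (\<mu> - a) (\<nu> - a)"])
      show "det (mat2 b b (\<mu> - a) (\<nu> - a)) \<noteq> 0"
        using False \<open>\<mu> - \<nu> \<noteq> 0\<close> by (simp add: algebra_simps)
      show "C ** mat2 b b (\<mu> - a) (\<nu> - a) = mat2 b b (\<mu> - a) (\<nu> - a) ** diag2 \<mu> \<nu>"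
        unfolding C diag2_eq_mat2 mat2_mult mat2_eq_iff using det tr by algebra
    qed
  next
    case b: True
    show ?thesis
    proof (cases "c = 0")
      case False
      show ?thesis
      proof (rule conj_classI[where P = "mat2 (\<mu> - d) (\<nu> - d) c c"])
        show "det (mat2 (\<mu> - d) (\<nu> - d) c c) \<noteq> 0"
          using False \<open>\<mu> - \<nu> \<noteq> 0\<close> by (simp add: algebra_simps)
        show "C ** mat2 (\<mu> - d) (\<nu> - d) c c = mat2 (\<mu> - d) (\<nu> - d) c c ** diag2 \<mu> \<nu>"
          unfolding C diag2_eq_mat2 mat2_mult mat2_eq_iff using det tr b by algebra
      qed
    next
      case c: True
      have "(a - \<mu>) * (a - \<nu>) = 0" using det tr b c by algebra
      then consider "a = \<mu>" "d = \<nu>" | "a = \<nu>" "d = \<mu>" using tr by auto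
      then show ?thesis
      proof cases
        case 1
        then show ?thesis using b c
          by (intro conj_classI[where P = "mat 1"]) (simp_all add: C diag2_eq_mat2)
      next
        case 2
        then show ?thesis using b c
          by (intro conj_classI[where P = "mat2 0 1 1 0"]) (simp_all add: C diag2_eq_mat2)
      qed
    qed
  qed
qed

lemma conj_class_diag2_cis:
  assumes "det C = 1" "trace C = of_real (2 * cos \<alpha>)" "sin \<alpha> \<noteq> 0"
  shows "conj_class C (diag2 (cis (-\<alpha>)) (cis \<alpha>))"
proof (rule conj_class_diag2)
  show "det C = cis (-\<alpha>) * cis \<alpha>" using assms(1) by (simp add: cis_mult)
  show "trace C = cis (-\<alpha>) + cis \<alpha>" using assms(2) by (simp add: complex_eq_iff)
  show "cis (-\<alpha>) \<noteq> cis \<alpha>" using assms(3) by (simp add: complex_eq_iff)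
qed

lemma trace_diag2_cis: "trace (diag2 (cis \<theta>) (cis (-\<theta>))) = of_real (2 * cos \<theta>)"
  by (simp add: diag2_eq_mat2 complex_eq_iff)

lemma fricke_trace_sum:
  fixes A B C :: cmat2
  shows "trace (A**B**C) + trace (A**C**B) = trace A * trace (B**C) + trace B * trace (A**C)
     + trace C * trace (A**B) - trace A * trace B * trace C"
proof -
  obtain a1 b1 c1 d1 a2 b2 c2 d2 a3 b3 c3 d3 where
    ABC: "A = mat2 a1 b1 c1 d1" "B = mat2 a2 b2 c2 d2" "C = mat2 a3 b3 c3 d3"
    by (metis mat2_cases)
  show ?thesis unfolding ABC by simp algebra
qed

lemma fricke_trace_product:
  fixes A B C :: cmat2
  shows "trace (A**B**C) * trace (A**C**B) = det B * det C * trace A ^ 2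
     + det A * det C * trace B ^ 2 + det A * det B * trace C ^ 2
     + det C * trace (A**B) ^ 2 + det A * trace (B**C) ^ 2 + det B * trace (A**C) ^ 2
     - det C * trace A * trace B * trace (A**B) - det A * trace B * trace C * trace (B**C)
     - det B * trace A * trace C * trace (A**C) + trace (A**B) * trace (B**C) * trace (A**C)
     - 4 * det A * det B * det C"
proof -
  obtain a1 b1 c1 d1 a2 b2 c2 d2 a3 b3 c3 d3 where
    ABC: "A = mat2 a1 b1 c1 d1" "B = mat2 a2 b2 c2 d2" "C = mat2 a3 b3 c3 d3"
    by (metis mat2_cases)
  show ?thesis unfolding ABC by simp algebra
qed

lemma trace_commutator_SL2:
  fixes X Y :: cmat2
  assumes "det X = 1" "det Y = 1"
  shows "trace (matrix_inv Y ** matrix_inv X ** Y ** X)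
    = trace X ^ 2 + trace Y ^ 2 + trace (Y ** X) ^ 2 - trace X * trace Y * trace (Y ** X) - 2"
proof -
  obtain a1 b1 c1 d1 a2 b2 c2 d2 where X: "X = mat2 a1 b1 c1 d1" and Y: "Y = mat2 a2 b2 c2 d2"
    by (metis mat2_cases)
  have "a1 * d1 - b1 * c1 = 1" "a2 * d2 - b2 * c2 = 1" using assms X Y by simp_all
  then show ?thesis unfolding X Y by (simp add: matrix_inv_mat2) algebra
qed

lemma trace_relation_equal_traces:
  fixes A B C :: cmat2
  assumes "det A = 1" "det B = 1" "det C = 1"
    and "trace A = t" "trace B = t" "trace C = t" "trace (A**B**C) = t"
  shows "((2 - trace (A**B)) + (2 - trace (B**C)) + (2 - trace (A**C)) - (4 - t^2))^2
        = (2 - trace (A**B)) * (2 - trace (B**C)) * (2 - trace (A**C))"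
proof -
  \<comment> \<open>eliminate \<open>trace (A**C**B)\<close> between the two Fricke identities\<close>
  have "t + trace (A**C**B) = t * (trace (A**B) + trace (B**C) + trace (A**C)) - t^3"
    using fricke_trace_sum[of A B C] assms by (simp add: power3_eq_cube algebra_simps)
  moreover have "t * trace (A**C**B) = 3 * t^2 + trace (A**B)^2 + trace (B**C)^2 + trace (A**C)^2
     - t^2 * (trace (A**B) + trace (B**C) + trace (A**C))
     + trace (A**B) * trace (B**C) * trace (A**C) - 4"
    using fricke_trace_product[of A B C] assms by (simp add: power2_eq_square algebra_simps)
  ultimately show ?thesis by algebra
qed

lemma markov_cubic_real_root_of_squares:
  fixes X Y Z k :: real
  assumes "0 < X" "0 < Y" "(X + Y + Z - k)^2 = X * Y * Z"
  shows "\<exists>x y z. x^2 = X \<and> y^2 = Y \<and> z^2 = Z \<and> x^2 + y^2 + z^2 - x * y * z = k"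
proof (intro exI conjI)
  define z where "z = (X + Y + Z - k) / (sqrt X * sqrt Y)"
  show "(sqrt X)^2 = X" "(sqrt Y)^2 = Y" using assms by simp_all
  show "z^2 = Z"
    using assms by (simp add: z_def power_divide power_mult_distrib)
  have "sqrt X * sqrt Y * z = X + Y + Z - k" using assms by (simp add: z_def)
  then show "(sqrt X)^2 + (sqrt Y)^2 + z^2 - sqrt X * sqrt Y * z = k"
    using assms \<open>z^2 = Z\<close> by simp
qed

lemma exists_SL2R_pair_with_traces:
  fixes x y z :: real
  assumes "2 \<le> \<bar>z\<bar>"
  shows "\<exists>X Y. SL2R X \<and> SL2R Y \<and> trace X = x \<and> trace Y = y \<and> trace (Y ** X) = z"
proof -
  \<comment> \<open>\<open>trace (Y ** X) = -b - 1/b\<close> below, so \<open>b\<close> must be a real root of \<open>b\<^sup>2 + z b + 1\<close>\<close>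
  define b where "b = (sqrt (z^2 - 4) - z) / 2"
  have "z^2 \<ge> 4" using assms abs_le_square_iff[of 2 z] by simp
  then have quadratic: "b^2 + z * b + 1 = 0"
    by (simp add: b_def power2_eq_square field_simps)
  then have "b \<noteq> 0" by auto
  with quadratic have z: "z = - b - 1 / b"
    by (simp add: field_simps power2_eq_square)
  define X where "X = mat2 x 1 (-1) 0"
  define Y where "Y = mat2 0 b (- (1 / b)) y"
  have "SL2R X \<and> SL2R Y \<and> trace X = x \<and> trace Y = y \<and> trace (Y ** X) = z"
    using \<open>b \<noteq> 0\<close> unfolding X_def Y_def SL2R_def SL2C_def real_mat_mat2 z by simp
  then show ?thesis by blast
qed

lemma real_mat_trace_mult:
  assumes "real_mat A" "real_mat B"
  shows "trace (A ** B) \<in> \<real>"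
proof -
  obtain a1 b1 c1 d1 a2 b2 c2 d2 where AB: "A = mat2 a1 b1 c1 d1" "B = mat2 a2 b2 c2 d2"
    by (metis mat2_cases)
  show ?thesis using assms unfolding AB real_mat_mat2 by simp
qed

lemma real_rep2I: "real_mat X \<Longrightarrow> real_mat Y \<Longrightarrow> real_rep2 X Y"
  unfolding real_rep2_def
  by (rule exI[of _ "mat 1"]) (simp add: invertible_def matrix_inv_unique[of "mat 1" "mat 1"])

lemma in_M11I:
  assumes "det X = 1" "det Y = 1" "sin (2 * pi * r) \<noteq> 0"
    and "trace X ^ 2 + trace Y ^ 2 + trace (Y ** X) ^ 2 - trace X * trace Y * trace (Y ** X)
      = of_real (2 + 2 * cos (2 * pi * r))"
  shows "in_M11 r X Y"
proof -
  have "det (matrix_inv Y ** matrix_inv X ** Y ** X) = 1"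
    using assms(1,2) by (simp add: det_mul det_matrix_inv invertible_det_nz)
  moreover have "trace (matrix_inv Y ** matrix_inv X ** Y ** X) = of_real (2 * cos (2 * pi * r))"
    using trace_commutator_SL2[OF assms(1,2)] assms(4) by simp
  ultimately show ?thesis
    using conj_class_diag2_cis assms unfolding in_M11_def SL2C_def by blast
qed

lemma cos_two_angle_minus_pi: "2 + 2 * cos (2 * \<theta> - pi) = 4 - (2 * cos \<theta>)^2"
  by (simp add: cos_diff cos_double_cos power_mult_distrib)

lemma RSR_trace_relation:
  assumes "RSR rt M1 M2 M3 M4"
  defines "t \<equiv> 2 * cos (2 * pi * rt)"
  obtains u v w :: real where
    "trace (M2 ** M1) = u" "trace (M3 ** M2) = v" "trace (M3 ** M1) = w"
    "u < -2" "v < -2" "w < -2"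
    "((2 - u) + (2 - v) + (2 - w) - (4 - t^2))^2 = (2 - u) * (2 - v) * (2 - w)"
proof -
  have rep: "rep_S4 M1 M2 M3 M4" and real: "SL2R M1" "SL2R M2" "SL2R M3"
    and neg: "Re (trace (M1 ** M2)) < -2" "Re (trace (M2 ** M3)) < -2" "Re (trace (M1 ** M3)) < -2"
    and cls: "\<forall>M \<in> {M1, M2, M3, M4}. conj_class M (diag2 (cis (2 * pi * rt)) (cis (-(2 * pi * rt))))"
    using assms(1) unfolding RSR_def by blast+
  have det: "det M1 = 1" "det M2 = 1" "det M3 = 1" and rel: "M4 ** M3 ** M2 ** M1 = mat 1"
    using rep unfolding rep_S4_def SL2C_def by blast+
  have tr: "trace M = of_real t" if "M \<in> {M1, M2, M3, M4}" for M
  proof -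
    have "conj_class M (diag2 (cis (2 * pi * rt)) (cis (-(2 * pi * rt))))" using cls that by blast
    then show ?thesis unfolding t_def by (simp add: conj_class_trace trace_diag2_cis)
  qed
  have det321: "det (M3 ** M2 ** M1) = 1" using det by (simp add: det_mul)
  moreover have "M4 ** (M3 ** M2 ** M1) = mat 1" using rel by (simp add: matrix_mul_assoc)
  ultimately have "M4 = matrix_inv (M3 ** M2 ** M1)"
    by (intro left_inverse_eq_matrix_inv) (auto simp: invertible_det_nz)
  then have tr321: "trace (M3 ** M2 ** M1) = of_real t"
    using tr trace_matrix_inv_SL2[OF det321] by simp
  have real_mat: "real_mat M1" "real_mat M2" "real_mat M3" using real unfolding SL2R_def by blast+
  obtain u where u: "trace (M2 ** M1) = of_real u"
    using real_mat_trace_mult[OF real_mat(2,1)] by (rule Reals_cases)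
  obtain v where v: "trace (M3 ** M2) = of_real v"
    using real_mat_trace_mult[OF real_mat(3,2)] by (rule Reals_cases)
  obtain w where w: "trace (M3 ** M1) = of_real w"
    using real_mat_trace_mult[OF real_mat(3,1)] by (rule Reals_cases)
  have "u < -2" "v < -2" "w < -2"
    using neg u v w
    by (simp_all add: trace_mul_sym[of M1 M2] trace_mul_sym[of M2 M3] trace_mul_sym[of M1 M3])
  moreover have "complex_of_real (((2 - v) + (2 - u) + (2 - w) - (4 - t^2))^2)
      = complex_of_real ((2 - v) * (2 - u) * (2 - w))"
    using trace_relation_equal_traces[of M3 M2 M1 t] det tr tr321 u v w by simp
  then have "((2 - u) + (2 - v) + (2 - w) - (4 - t^2))^2 = (2 - u) * (2 - v) * (2 - w)"
    unfolding of_real_eq_iff by (simp add: ac_simps)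
  ultimately show ?thesis using that u v w by blast
qed

theorem corollary3p12:
  fixes rt :: real and M1 M2 M3 M4 :: cmat2
  assumes "1/4 < rt" and "rt < 1/2"
    and "RSR rt M1 M2 M3 M4"
  shows "\<exists>X Y. in_M11 (2 * rt - 1/2) X Y \<and> real_rep2 X Y \<and>
           trace (M2 ** M1) = 2 - (trace X)^2 \<and>
           trace (M3 ** M2) = 2 - (trace Y)^2 \<and>
           trace (M3 ** M1) = 2 - (trace (Y ** X))^2"
proof -
  define t where "t = 2 * cos (2 * pi * rt)"
  define r where "r = 2 * rt - 1/2"
  obtain u v w :: real where uvw: "trace (M2 ** M1) = u" "trace (M3 ** M2) = v" "trace (M3 ** M1) = w"
    and "u < -2" "v < -2" "w < -2"
    and rel: "((2 - u) + (2 - v) + (2 - w) - (4 - t^2))^2 = (2 - u) * (2 - v) * (2 - w)"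
    by (rule RSR_trace_relation[OF assms(3), folded t_def])
  obtain x y z :: real where xyz: "x^2 = 2 - u" "y^2 = 2 - v" "z^2 = 2 - w"
    and markov: "x^2 + y^2 + z^2 - x * y * z = 4 - t^2"
    using markov_cubic_real_root_of_squares[OF _ _ rel] \<open>u < -2\<close> \<open>v < -2\<close> by auto
  have "2 \<le> \<bar>z\<bar>" using xyz \<open>w < -2\<close> abs_le_square_iff[of 2 z] by simp
  then obtain X Y where XY: "SL2R X" "SL2R Y" "trace X = x" "trace Y = y" "trace (Y ** X) = z"
    using exists_SL2R_pair_with_traces by blast
  have "4 - t^2 = 2 + 2 * cos (2 * pi * r)"
    using cos_two_angle_minus_pi[of "2 * pi * rt"] by (simp add: t_def r_def algebra_simps)
  with markov have "complex_of_real (x^2 + y^2 + z^2 - x * y * z) = of_real (2 + 2 * cos (2 * pi * r))"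
    by (simp only:)
  then have "trace X ^ 2 + trace Y ^ 2 + trace (Y ** X) ^ 2 - trace X * trace Y * trace (Y ** X)
      = of_real (2 + 2 * cos (2 * pi * r))"
    unfolding XY(3-5) by simp
  moreover have "sin (2 * pi * r) > 0"
    using assms(1,2) by (intro sin_gt_zero) (simp_all add: r_def algebra_simps)
  ultimately have "in_M11 r X Y"
    using XY unfolding SL2R_def SL2C_def by (intro in_M11I) simp_all
  moreover have "real_rep2 X Y" using XY real_rep2I unfolding SL2R_def by blast
  moreover have "u = 2 - x^2" "v = 2 - y^2" "w = 2 - z^2" using xyz by simp_all
  ultimately show ?thesis using XY uvw unfolding r_def by (intro exI[of _ X] exI[of _ Y]) simp
qed

end
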